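(* Let $f\in\mathcal{H}$ be strongly non-polynomial with $\log t\prec f(t)$. Then for all sufficiently large $k$, $$1\prec|f^{(k)}(t)|^{-1/k}\prec|f^{(k+1)}(t)|^{-1/(k+1)}\prec t.$$
   Context: $\mathcal{H}$ is a fixed Hardy field (subfield of germs at $+\infty$ of real functions, closed under differentiation) containing the logarithmico-exponential functions, closed under composition and compositional inversion. $f\in\mathcal{H}$ is strongly non-polynomial if there is a non-negative integer $d$ with $t^d\prec f(t)\prec t^{d+1}$. $f\prec g$ means $f(t)/g(t)\to0$ as $t\to\infty$. *)

theory Defs
  imports "HOL-Analysis.Analysis" "HOL-Library.Landau_Symbols"
begin

text \<open>Germs at +infinity are represented by functions real => real; a set H of such
functions is read modulo eventual equality at at_top.\<close>

definition germ_in :: "(real \<Rightarrow> real) \<Rightarrow> (real \<Rightarrow> real) set \<Rightarrow> bool" where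
  "germ_in f H \<longleftrightarrow> (\<exists>h\<in>H. eventually (\<lambda>x. h x = f x) at_top)"

definition hardy_field :: "(real \<Rightarrow> real) set \<Rightarrow> bool" where
  "hardy_field H \<longleftrightarrow>
     (\<forall>c. germ_in (\<lambda>_. c) H) \<and>
     (\<forall>f\<in>H. \<forall>g\<in>H. germ_in (\<lambda>x. f x + g x) H) \<and>
     (\<forall>f\<in>H. germ_in (\<lambda>x. - f x) H) \<and>
     (\<forall>f\<in>H. \<forall>g\<in>H. germ_in (\<lambda>x. f x * g x) H) \<and>
     (\<forall>f\<in>H. \<not> eventually (\<lambda>x. f x = 0) at_top \<longrightarrow>
        (\<exists>g\<in>H. eventually (\<lambda>x. f x * g x = 1) at_top)) \<and>
     (\<forall>f\<in>H. \<exists>f'\<in>H. eventually (\<lambda>x. (f has_real_derivative f' x) (at x)) at_top)"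

inductive_set LE_functions :: "(real \<Rightarrow> real) set" where
  LE_const: "(\<lambda>_. c) \<in> LE_functions"
| LE_id: "(\<lambda>x. x) \<in> LE_functions"
| LE_add: "f \<in> LE_functions \<Longrightarrow> g \<in> LE_functions \<Longrightarrow> (\<lambda>x. f x + g x) \<in> LE_functions"
| LE_minus: "f \<in> LE_functions \<Longrightarrow> (\<lambda>x. - f x) \<in> LE_functions"
| LE_mult: "f \<in> LE_functions \<Longrightarrow> g \<in> LE_functions \<Longrightarrow> (\<lambda>x. f x * g x) \<in> LE_functions"
| LE_inverse: "f \<in> LE_functions \<Longrightarrow> eventually (\<lambda>x. f x \<noteq> 0) at_top \<Longrightarrow>
     (\<lambda>x. inverse (f x)) \<in> LE_functions"
| LE_exp: "f \<in> LE_functions \<Longrightarrow> (\<lambda>x. exp (f x)) \<in> LE_functions"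
| LE_ln: "f \<in> LE_functions \<Longrightarrow> eventually (\<lambda>x. f x > 0) at_top \<Longrightarrow>
     (\<lambda>x. ln (f x)) \<in> LE_functions"

definition standing_hardy_field :: "(real \<Rightarrow> real) set \<Rightarrow> bool" where
  "standing_hardy_field H \<longleftrightarrow>
     hardy_field H \<and>
     (\<forall>g\<in>LE_functions. germ_in g H) \<and>
     (\<forall>f\<in>H. \<forall>g\<in>H. filterlim g at_top at_top \<longrightarrow> germ_in (\<lambda>x. f (g x)) H) \<and>
     (\<forall>f\<in>H. filterlim f at_top at_top \<longrightarrow>
        (\<exists>g\<in>H. filterlim g at_top at_top \<and> eventually (\<lambda>x. g (f x) = x) at_top))"

definition strongly_nonpolynomial :: "(real \<Rightarrow> real) \<Rightarrow> bool" where
  "strongly_nonpolynomial f \<longleftrightarrow>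
     (\<exists>d::nat. (\<lambda>t. t ^ d) \<in> o[at_top](f) \<and> f \<in> o[at_top](\<lambda>t. t ^ (d + 1)))"

end

theory Submission
  imports Defs
begin

(*
  For a germ u of the Hardy field call x u'(x) / u(x) its elasticity. The elasticity lies in
  the field, so it is eventually comparable with every constant; if u is squeezed between two
  powers of x this forces it to converge, and its limit a, the growth exponent of u, satisfies
  ln |u(x)| / ln x --> a. The derivative of u then has growth exponent a - 1 whenever a ~= 0.

  A strongly non-polynomial f has growth exponent a in [d, d + 1]. If a is not an integer, the
  exponents a - k of f^(k) are negative for k > d. If a = n is an integer, f^(n) has exponent 0
  and is unbounded (n = d) or tends to 0 (n = d + 1); either way |f^(n+1)(x)| cannot be
  O(x^(-1-delta)), which makes -1 the exponent of f^(n+1). Moreover x^k |f^(k)(x)| --> oo for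
  large k: directly if a > 0, and by ln t = o(f) if a = 0.

  For such k, let e < 0 be the exponent of f^(k). Then |f^(k)(x)| <= x^(e/2) gives the first
  comparison, and x |f^(k+1)(x)| ~ |f^(k)(x)| together with x^k |f^(k)(x)| --> oo give the
  other two.
*)

section \<open>Estimates for real functions at infinity\<close>

lemma eventually_powr_le_imp_le:
  fixes b c C :: real
  assumes "eventually (\<lambda>x. x powr b \<le> C * x powr c) at_top"
  shows "b \<le> c"
proof -
  have "(\<lambda>x. x powr b) \<in> O[at_top](\<lambda>x. x powr c)"
    using assms by (intro bigoI[of _ C]) (auto elim!: eventually_mono)
  then show ?thesis
    using powr_bigo_iff[OF filterlim_ident] by simp
qed

lemma powr_le_abs_of_power_smallo:
  fixes u :: "real \<Rightarrow> real"
  assumes "(\<lambda>t. t ^ d) \<in> o[at_top](u)"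
  shows "eventually (\<lambda>x. x powr real d \<le> \<bar>u x\<bar>) at_top"
  using landau_o.smallD[OF assms zero_less_one] eventually_gt_at_top[of 0]
  by eventually_elim (simp add: powr_realpow)

lemma abs_le_powr_of_smallo_power:
  fixes u :: "real \<Rightarrow> real"
  assumes "u \<in> o[at_top](\<lambda>t. t ^ d)"
  shows "eventually (\<lambda>x. \<bar>u x\<bar> \<le> x powr real d) at_top"
  using landau_o.smallD[OF assms zero_less_one] eventually_gt_at_top[of 0]
  by eventually_elim (simp add: powr_realpow)

lemma ln_div_ln_le_iff:
  fixes x y b :: real
  assumes "1 < x" and "0 < y"
  shows "ln y / ln x \<le> b \<longleftrightarrow> y \<le> x powr b"
proof -
  have "ln y / ln x \<le> b \<longleftrightarrow> ln y \<le> b * ln x"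
    using assms by (simp add: divide_le_eq)
  also have "b * ln x = ln (x powr b)"
    using assms by (simp add: ln_powr)
  also have "ln y \<le> ln (x powr b) \<longleftrightarrow> y \<le> x powr b"
    using assms by (intro ln_le_cancel_iff) auto
  finally show ?thesis .
qed

lemma le_ln_div_ln_iff:
  fixes x y b :: real
  assumes "1 < x" and "0 < y"
  shows "b \<le> ln y / ln x \<longleftrightarrow> x powr b \<le> y"
proof -
  have "b \<le> ln y / ln x \<longleftrightarrow> b * ln x \<le> ln y"
    using assms by (simp add: le_divide_eq)
  also have "b * ln x = ln (x powr b)"
    using assms by (simp add: ln_powr)
  also have "ln (x powr b) \<le> ln y \<longleftrightarrow> x powr b \<le> y"
    using assms by (intro ln_le_cancel_iff) auto
  finally show ?thesis .
qed

lemma eventually_abs_le_powr_of_ln_ratio: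
  fixes u :: "real \<Rightarrow> real"
  assumes "((\<lambda>x. ln \<bar>u x\<bar> / ln x) \<longlongrightarrow> c) at_top" and "c < b"
  shows "eventually (\<lambda>x. \<bar>u x\<bar> \<le> x powr b) at_top"
  using order_tendstoD(2)[OF assms] eventually_gt_at_top[of 1]
proof eventually_elim
  case (elim x)
  then show ?case
    by (cases "u x = 0") (simp_all add: ln_div_ln_le_iff[symmetric])
qed

lemma eventually_powr_le_abs_of_ln_ratio:
  fixes u :: "real \<Rightarrow> real"
  assumes "((\<lambda>x. ln \<bar>u x\<bar> / ln x) \<longlongrightarrow> c) at_top" and "b < c"
    and "eventually (\<lambda>x. u x \<noteq> 0) at_top"
  shows "eventually (\<lambda>x. x powr b \<le> \<bar>u x\<bar>) at_top"
  using order_tendstoD(1)[OF assms(1,2)] assms(3) eventually_gt_at_top[of 1]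
  by eventually_elim (simp add: le_ln_div_ln_iff[symmetric])

lemma ln_ratio_limit_le:
  fixes u :: "real \<Rightarrow> real"
  assumes "((\<lambda>x. ln \<bar>u x\<bar> / ln x) \<longlongrightarrow> c) at_top"
    and "eventually (\<lambda>x. u x \<noteq> 0) at_top" and "eventually (\<lambda>x. \<bar>u x\<bar> \<le> x powr b) at_top"
  shows "c \<le> b"
proof (rule tendsto_upperbound[OF assms(1)])
  show "eventually (\<lambda>x. ln \<bar>u x\<bar> / ln x \<le> b) at_top"
    using assms(2,3) eventually_gt_at_top[of 1]
    by eventually_elim (simp add: ln_div_ln_le_iff)
qed simp

lemma ln_ratio_limit_ge:
  fixes u :: "real \<Rightarrow> real"
  assumes "((\<lambda>x. ln \<bar>u x\<bar> / ln x) \<longlongrightarrow> c) at_top"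
    and "eventually (\<lambda>x. x powr b \<le> \<bar>u x\<bar>) at_top"
  shows "b \<le> c"
proof (rule tendsto_lowerbound[OF assms(1)])
  show "eventually (\<lambda>x. b \<le> ln \<bar>u x\<bar> / ln x) at_top"
    using assms(2) eventually_gt_at_top[of 1]
  proof eventually_elim
    case (elim x)
    then have "0 < \<bar>u x\<bar>"
      using powr_gt_zero[of x b] by linarith
    with elim show ?case by (simp add: le_ln_div_ln_iff)
  qed
qed simp

lemma has_real_derivative_ln_abs:
  assumes "(u has_real_derivative u') (at x)" and "u x \<noteq> 0"
  shows "((\<lambda>y. ln \<bar>u y\<bar>) has_real_derivative u' / u x) (at x)"
proof -
  have ln_abs: "ln \<bar>a\<bar> = ln (a ^ 2) / 2" for a :: real
  proof (cases "a = 0")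
    case False
    have "ln (a ^ 2) = ln (\<bar>a\<bar> ^ 2)" by (simp only: power2_abs)
    also have "\<dots> = 2 * ln \<bar>a\<bar>" using False by (subst ln_realpow) auto
    finally show ?thesis by simp
  qed simp
  have "((\<lambda>y. ln (u y ^ 2) / 2) has_real_derivative (2 * u x * u' / u x ^ 2) / 2) (at x)"
    using assms by (auto intro!: derivative_eq_intros)
  moreover have "(2 * u x * u' / u x ^ 2) / 2 = u' / u x"
    using assms(2) by (simp add: power2_eq_square)
  ultimately show ?thesis
    by (simp only: ln_abs)
qed

lemma powr_le_abs_of_elasticity_ge:
  fixes u u' :: "real \<Rightarrow> real"
  assumes "eventually (\<lambda>x. (u has_real_derivative u' x) (at x)) at_top"
    and "eventually (\<lambda>x. u x \<noteq> 0) at_top"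
    and "eventually (\<lambda>x. b \<le> x * u' x / u x) at_top" and "b' < b"
  shows "eventually (\<lambda>x. x powr b' \<le> \<bar>u x\<bar>) at_top"
proof -
  from eventually_conj[OF assms(1) eventually_conj[OF assms(2)
      eventually_conj[OF assms(3) eventually_gt_at_top[of 0]]]]
  obtain N where N: "\<And>x. x \<ge> N \<Longrightarrow>
      (u has_real_derivative u' x) (at x) \<and> u x \<noteq> 0 \<and> b \<le> x * u' x / u x \<and> x > 0"
    unfolding eventually_at_top_linorder by blast
  define w where "w x = ln \<bar>u x\<bar> - b * ln x" for x
  have w_mono: "w N \<le> w x" if "N \<le> x" for x
  proof (rule DERIV_nonneg_imp_nondecreasing[OF that])
    fix y assume "N \<le> y"
    with N have y: "(u has_real_derivative u' y) (at y)" "u y \<noteq> 0" "b \<le> y * u' y / u y" "y > 0"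
      by auto
    have "(w has_real_derivative u' y / u y - b * (1 / y)) (at y)"
      unfolding w_def[abs_def]
      by (intro DERIV_diff has_real_derivative_ln_abs DERIV_cmult DERIV_ln_divide y)
    moreover have "b / y \<le> u' y / u y"
      using y(3,4) by (simp add: divide_le_eq field_simps)
    ultimately show "\<exists>w'. (w has_real_derivative w') (at y) \<and> 0 \<le> w'"
      by auto
  qed
  show ?thesis
    using eventually_ge_at_top[of N] ln_at_top[unfolded filterlim_at_top, rule_format, of "- w N / (b - b')"]
  proof eventually_elim
    case (elim x)
    with N have "x > 0" "u x \<noteq> 0" by auto
    have "- w N \<le> (b - b') * ln x"
      using elim(2) pos_divide_le_eq[of "b - b'" "- w N"] \<open>b' < b\<close> by (simp add: mult.commute)
    with w_mono[OF elim(1)] have "ln (x powr b') \<le> ln \<bar>u x\<bar>"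
      using \<open>x > 0\<close> by (simp add: w_def ln_powr algebra_simps)
    with \<open>x > 0\<close> \<open>u x \<noteq> 0\<close> show ?case
      by (subst (asm) ln_le_cancel_iff) auto
  qed
qed

lemma abs_le_powr_of_elasticity_le:
  fixes u u' :: "real \<Rightarrow> real"
  assumes deriv: "eventually (\<lambda>x. (u has_real_derivative u' x) (at x)) at_top"
    and nz: "eventually (\<lambda>x. u x \<noteq> 0) at_top"
    and le: "eventually (\<lambda>x. x * u' x / u x \<le> b) at_top" and "b < b'"
  shows "eventually (\<lambda>x. \<bar>u x\<bar> \<le> x powr b') at_top"
proof -
  \<comment> \<open>The elasticity of \<open>1 / u\<close> is minus that of \<open>u\<close>.\<close>
  have "eventually (\<lambda>x. x powr - b' \<le> \<bar>inverse (u x)\<bar>) at_top"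
  proof (rule powr_le_abs_of_elasticity_ge)
    show "eventually (\<lambda>x. ((\<lambda>x. inverse (u x)) has_real_derivative
        - (u' x * inverse (u x ^ 2))) (at x)) at_top"
      using deriv nz by eventually_elim (rule DERIV_inverse_fun[unfolded numeral_2_eq_2[symmetric]])
    show "eventually (\<lambda>x. - b \<le> x * - (u' x * inverse (u x ^ 2)) / inverse (u x)) at_top"
      using le nz
    proof eventually_elim
      case (elim x)
      from elim(2) have "x * - (u' x * inverse (u x ^ 2)) / inverse (u x) = - (x * u' x / u x)"
        by (simp add: power2_eq_square field_simps)
      with elim(1) show ?case by linarith
    qed
    show "eventually (\<lambda>x. inverse (u x) \<noteq> 0) at_top"
      using nz by eventually_elim simp
  qed (use \<open>b < b'\<close> in simp)
  then show ?thesis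
    using nz eventually_gt_at_top[of 0]
  proof eventually_elim
    case (elim x)
    then have "inverse (x powr b') \<le> inverse \<bar>u x\<bar>"
      by (simp add: powr_minus)
    with elim(2,3) show ?case
      using inverse_le_iff_le[of "x powr b'" "\<bar>u x\<bar>"] by simp
  qed
qed

lemma abs_diff_le_of_abs_deriv_le:
  fixes u u' G g :: "real \<Rightarrow> real"
  assumes u: "\<And>t. N \<le> t \<Longrightarrow> (u has_real_derivative u' t) (at t)"
    and G: "\<And>t. N \<le> t \<Longrightarrow> (G has_real_derivative g t) (at t)"
    and bound: "\<And>t. N \<le> t \<Longrightarrow> \<bar>u' t\<bar> \<le> g t"
    and "N \<le> x" and "x \<le> y"
  shows "\<bar>u y - u x\<bar> \<le> G y - G x"
proof -
  have "u y - G y \<le> u x - G x"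
  proof (rule DERIV_nonpos_imp_nonincreasing[where f = "\<lambda>t. u t - G t", OF \<open>x \<le> y\<close>])
    fix t assume "x \<le> t"
    with \<open>N \<le> x\<close> have "N \<le> t" by simp
    have "((\<lambda>t. u t - G t) has_real_derivative u' t - g t) (at t)"
      using u[OF \<open>N \<le> t\<close>] G[OF \<open>N \<le> t\<close>] by (rule DERIV_diff)
    moreover have "u' t - g t \<le> 0"
      using bound[OF \<open>N \<le> t\<close>] by linarith
    ultimately show "\<exists>d. ((\<lambda>t. u t - G t) has_real_derivative d) (at t) \<and> d \<le> 0"
      by blast
  qed
  moreover have "u x + G x \<le> u y + G y"
  proof (rule DERIV_nonneg_imp_nondecreasing[where f = "\<lambda>t. u t + G t", OF \<open>x \<le> y\<close>])
    fix t assume "x \<le> t"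
    with \<open>N \<le> x\<close> have "N \<le> t" by simp
    have "((\<lambda>t. u t + G t) has_real_derivative u' t + g t) (at t)"
      using u[OF \<open>N \<le> t\<close>] G[OF \<open>N \<le> t\<close>] by (rule DERIV_add)
    moreover have "0 \<le> u' t + g t"
      using bound[OF \<open>N \<le> t\<close>] by linarith
    ultimately show "\<exists>d. ((\<lambda>t. u t + G t) has_real_derivative d) (at t) \<and> 0 \<le> d"
      by blast
  qed
  ultimately show ?thesis by linarith
qed

lemma abs_diff_le_of_abs_deriv_le_powr:
  fixes u u' :: "real \<Rightarrow> real"
  assumes "eventually (\<lambda>x. (u has_real_derivative u' x) (at x)) at_top"
    and "eventually (\<lambda>x. \<bar>u' x\<bar> \<le> x powr (- 1 - \<delta>)) at_top" and "\<delta> > 0"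
  obtains N where "\<And>x y. N \<le> x \<Longrightarrow> x \<le> y \<Longrightarrow> \<bar>u y - u x\<bar> \<le> x powr - \<delta> / \<delta>"
proof -
  from eventually_conj[OF assms(1) eventually_conj[OF assms(2) eventually_gt_at_top[of 0]]]
  obtain N where N: "\<And>x. N \<le> x \<Longrightarrow>
      (u has_real_derivative u' x) (at x) \<and> \<bar>u' x\<bar> \<le> x powr (- 1 - \<delta>) \<and> 0 < x"
    unfolding eventually_at_top_linorder by blast
  have G: "((\<lambda>t. - (t powr - \<delta> / \<delta>)) has_real_derivative t powr (- 1 - \<delta>)) (at t)" if "0 < t" for t
  proof -
    have "((\<lambda>t. - (t powr - \<delta> / \<delta>)) has_real_derivative - (- \<delta> * t powr (- \<delta> - 1) / \<delta>)) (at t)"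
      using that by (intro DERIV_minus DERIV_cdivide has_real_derivative_powr)
    moreover have "t powr (- \<delta> - 1) = t powr (- 1 - \<delta>)"
      by (rule arg_cong[where f = "(powr) t"]) simp
    ultimately show ?thesis
      using \<open>\<delta> > 0\<close> by simp
  qed
  show thesis
  proof (rule that)
    fix x y assume "N \<le> x" "x \<le> y"
    then have "\<bar>u y - u x\<bar> \<le> - (y powr - \<delta> / \<delta>) - - (x powr - \<delta> / \<delta>)"
      by (intro abs_diff_le_of_abs_deriv_le[where N = N]) (use N G in auto)
    also have "\<dots> \<le> x powr - \<delta> / \<delta>"
      using \<open>\<delta> > 0\<close> by simp
    finally show "\<bar>u y - u x\<bar> \<le> x powr - \<delta> / \<delta>" .
  qed
qed

lemma eventually_bounded_of_abs_deriv_le_powr: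
  fixes u u' :: "real \<Rightarrow> real"
  assumes "eventually (\<lambda>x. (u has_real_derivative u' x) (at x)) at_top"
    and "eventually (\<lambda>x. \<bar>u' x\<bar> \<le> x powr (- 1 - \<delta>)) at_top" and "\<delta> > 0"
  shows "\<exists>B. eventually (\<lambda>x. \<bar>u x\<bar> \<le> B) at_top"
proof -
  obtain N where N: "\<And>x y. N \<le> x \<Longrightarrow> x \<le> y \<Longrightarrow> \<bar>u y - u x\<bar> \<le> x powr - \<delta> / \<delta>"
    using abs_diff_le_of_abs_deriv_le_powr[OF assms] by blast
  have "eventually (\<lambda>x. \<bar>u x\<bar> \<le> \<bar>u N\<bar> + N powr - \<delta> / \<delta>) at_top"
    using eventually_ge_at_top[of N]
    by eventually_elim (use N[of N] abs_triangle_ineq2[of "u _" "u N"] in fastforce)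
  then show ?thesis by blast
qed

lemma eventually_abs_le_powr_of_abs_deriv_le_powr:
  fixes u u' :: "real \<Rightarrow> real"
  assumes "eventually (\<lambda>x. (u has_real_derivative u' x) (at x)) at_top"
    and "eventually (\<lambda>x. \<bar>u' x\<bar> \<le> x powr (- 1 - \<delta>)) at_top" and "\<delta> > 0"
    and "(u \<longlongrightarrow> 0) at_top"
  shows "eventually (\<lambda>x. \<bar>u x\<bar> \<le> x powr - \<delta> / \<delta>) at_top"
proof -
  obtain N where N: "\<And>x y. N \<le> x \<Longrightarrow> x \<le> y \<Longrightarrow> \<bar>u y - u x\<bar> \<le> x powr - \<delta> / \<delta>"
    using abs_diff_le_of_abs_deriv_le_powr[OF assms(1-3)] by blast
  show ?thesis
    using eventually_ge_at_top[of N]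
  proof eventually_elim
    case (elim x)
    have "((\<lambda>y. \<bar>u y - u x\<bar>) \<longlongrightarrow> \<bar>0 - u x\<bar>) at_top"
      by (intro tendsto_intros assms(4))
    moreover have "eventually (\<lambda>y. \<bar>u y - u x\<bar> \<le> x powr - \<delta> / \<delta>) at_top"
      using eventually_ge_at_top[of x] by eventually_elim (rule N[OF elim])
    ultimately have "\<bar>0 - u x\<bar> \<le> x powr - \<delta> / \<delta>"
      by (rule tendsto_upperbound) simp
    then show ?case by simp
  qed
qed

lemma bigo_ln_of_abs_x_deriv_le:
  fixes u u' :: "real \<Rightarrow> real"
  assumes "eventually (\<lambda>x. (u has_real_derivative u' x) (at x)) at_top"
    and "eventually (\<lambda>x. \<bar>x * u' x\<bar> \<le> M) at_top"
  shows "u \<in> O[at_top](\<lambda>x. ln x)"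
proof -
  from eventually_conj[OF assms(1) eventually_conj[OF assms(2) eventually_gt_at_top[of 0]]]
  obtain N where N: "\<And>x. N \<le> x \<Longrightarrow>
      (u has_real_derivative u' x) (at x) \<and> \<bar>x * u' x\<bar> \<le> M \<and> 0 < x"
    unfolding eventually_at_top_linorder by blast
  have bound: "\<bar>u' t\<bar> \<le> M * (1 / t)" if "N \<le> t" for t
  proof -
    from N[OF that] have "t * \<bar>u' t\<bar> \<le> M" and "0 < t"
      by (auto simp: abs_mult)
    then show ?thesis by (simp add: field_simps)
  qed
  define C where "C = \<bar>u N\<bar> - M * ln N"
  have "eventually (\<lambda>x. \<bar>u x\<bar> \<le> M * ln x + C) at_top"
    using eventually_ge_at_top[of N]
  proof eventually_elim
    case (elim x)
    have "\<bar>u x - u N\<bar> \<le> M * ln x - M * ln N"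
    proof (rule abs_diff_le_of_abs_deriv_le[OF _ _ bound order_refl elim])
      fix t assume "N \<le> t"
      with N show "(u has_real_derivative u' t) (at t)" by blast
      from N \<open>N \<le> t\<close> have "0 < t" by blast
      then show "((\<lambda>t. M * ln t) has_real_derivative M * (1 / t)) (at t)"
        by (intro DERIV_cmult DERIV_ln_divide)
    qed
    then show ?case
      unfolding C_def by linarith
  qed
  then have "eventually (\<lambda>x. \<bar>u x\<bar> \<le> (\<bar>M\<bar> + \<bar>C\<bar>) * \<bar>ln x\<bar>) at_top"
    using ln_at_top[unfolded filterlim_at_top, rule_format, of 1]
  proof eventually_elim
    case (elim x)
    have "M * ln x \<le> \<bar>M\<bar> * ln x"
      using elim(2) by (intro mult_right_mono) auto
    moreover have "\<bar>C\<bar> * 1 \<le> \<bar>C\<bar> * ln x"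
      using elim(2) by (intro mult_left_mono) auto
    ultimately have "M * ln x + C \<le> \<bar>M\<bar> * ln x + \<bar>C\<bar> * ln x"
      using abs_ge_self[of C] by linarith
    with elim show ?case
      by (simp add: algebra_simps)
  qed
  then show ?thesis
    by (intro bigoI[of _ "\<bar>M\<bar> + \<bar>C\<bar>"]) simp
qed

lemma not_eventually_abs_deriv_le_powr:
  fixes u u' :: "real \<Rightarrow> real"
  assumes deriv: "eventually (\<lambda>x. (u has_real_derivative u' x) (at x)) at_top"
    and nz: "eventually (\<lambda>x. u x \<noteq> 0) at_top"
    and ln_ratio: "((\<lambda>x. ln \<bar>u x\<bar> / ln x) \<longlongrightarrow> 0) at_top"
    and unbounded_or_null: "(\<nexists>B. eventually (\<lambda>x. \<bar>u x\<bar> \<le> B) at_top) \<or> (u \<longlongrightarrow> 0) at_top"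
    and "\<delta> > 0"
  shows "\<not> eventually (\<lambda>x. \<bar>u' x\<bar> \<le> x powr (- 1 - \<delta>)) at_top"
proof
  assume small: "eventually (\<lambda>x. \<bar>u' x\<bar> \<le> x powr (- 1 - \<delta>)) at_top"
  from unbounded_or_null show False
  proof
    assume "\<nexists>B. eventually (\<lambda>x. \<bar>u x\<bar> \<le> B) at_top"
    with eventually_bounded_of_abs_deriv_le_powr[OF deriv small \<open>\<delta> > 0\<close>] show False
      by blast
  next
    assume "(u \<longlongrightarrow> 0) at_top"
    from eventually_abs_le_powr_of_abs_deriv_le_powr[OF deriv small \<open>\<delta> > 0\<close> this]
    have "eventually (\<lambda>x. \<bar>u x\<bar> \<le> (1 / \<delta>) * x powr - \<delta>) at_top"
      by simp
    moreover have "eventually (\<lambda>x. x powr (- \<delta> / 2) \<le> \<bar>u x\<bar>) at_top"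
      by (rule eventually_powr_le_abs_of_ln_ratio[OF ln_ratio _ nz]) (use \<open>\<delta> > 0\<close> in simp)
    ultimately have "eventually (\<lambda>x. x powr (- \<delta> / 2) \<le> (1 / \<delta>) * x powr - \<delta>) at_top"
      by eventually_elim simp
    then have "- \<delta> / 2 \<le> - \<delta>"
      by (rule eventually_powr_le_imp_le)
    with \<open>\<delta> > 0\<close> show False
      by simp
  qed
qed

lemma ln_ratio_tendsto_of_elasticity_tendsto:
  fixes u u' :: "real \<Rightarrow> real"
  assumes "eventually (\<lambda>x. (u has_real_derivative u' x) (at x)) at_top"
    and "eventually (\<lambda>x. u x \<noteq> 0) at_top"
    and "((\<lambda>x. x * u' x / u x) \<longlongrightarrow> c) at_top"
  shows "((\<lambda>x. ln \<bar>u x\<bar> / ln x) \<longlongrightarrow> c) at_top"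
proof (rule lhospital_at_top_at_top[where f' = "\<lambda>x. u' x / u x" and g' = "\<lambda>x. 1 / x"])
  show "filterlim (ln :: real \<Rightarrow> real) at_top at_top"
    by (rule ln_at_top)
  show "eventually (\<lambda>x. 1 / x \<noteq> (0::real)) at_top"
    using eventually_gt_at_top[of 0] by eventually_elim simp
  show "eventually (\<lambda>x. ((\<lambda>x. ln \<bar>u x\<bar>) has_real_derivative u' x / u x) (at x)) at_top"
    using assms(1,2) by eventually_elim (rule has_real_derivative_ln_abs)
  show "eventually (\<lambda>x. (ln has_real_derivative 1 / x) (at x)) at_top"
    using eventually_gt_at_top[of 0] by eventually_elim (rule DERIV_ln_divide)
  have "eventually (\<lambda>x. x * u' x / u x = (u' x / u x) / (1 / x)) at_top"
    using eventually_gt_at_top[of 0] by eventually_elim simp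
  with assms(3) show "((\<lambda>x. (u' x / u x) / (1 / x)) \<longlongrightarrow> c) at_top"
    by (simp add: tendsto_cong)
qed

lemma ln_ratio_tendsto_of_ratio_tendsto:
  fixes u v :: "real \<Rightarrow> real"
  assumes nz: "eventually (\<lambda>x. u x \<noteq> 0) at_top"
    and ratio: "((\<lambda>x. x * v x / u x) \<longlongrightarrow> a) at_top" and "a \<noteq> 0"
    and ln_ratio: "((\<lambda>x. ln \<bar>u x\<bar> / ln x) \<longlongrightarrow> c) at_top"
  shows "eventually (\<lambda>x. v x \<noteq> 0) at_top" and "((\<lambda>x. ln \<bar>v x\<bar> / ln x) \<longlongrightarrow> c - 1) at_top"
proof -
  have "eventually (\<lambda>x. x * v x / u x \<noteq> 0) at_top"
    using tendsto_imp_eventually_ne[OF ratio \<open>a \<noteq> 0\<close>] .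
  then show nz': "eventually (\<lambda>x. v x \<noteq> 0) at_top"
    by eventually_elim auto
  have "((\<lambda>x. ln \<bar>x * v x / u x\<bar> / ln x + ln \<bar>u x\<bar> / ln x - 1) \<longlongrightarrow> 0 + c - 1) at_top"
    by (intro tendsto_intros ln_ratio tendsto_divide_0[OF tendsto_ln[OF tendsto_rabs[OF ratio]]]
        filterlim_at_top_imp_at_infinity[OF ln_at_top]) (use \<open>a \<noteq> 0\<close> in simp)
  moreover have "eventually (\<lambda>x. ln \<bar>x * v x / u x\<bar> / ln x + ln \<bar>u x\<bar> / ln x - 1
      = ln \<bar>v x\<bar> / ln x) at_top"
    using nz nz' eventually_gt_at_top[of 1]
  proof eventually_elim
    case (elim x)
    then have "ln \<bar>x * v x / u x\<bar> = ln x + ln \<bar>v x\<bar> - ln \<bar>u x\<bar>"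
      by (simp add: abs_mult abs_divide ln_mult ln_div)
    with elim show ?case
      by (simp add: field_simps)
  qed
  ultimately show "((\<lambda>x. ln \<bar>v x\<bar> / ln x) \<longlongrightarrow> c - 1) at_top"
    by (simp add: tendsto_cong)
qed

lemma tendsto_of_bounded_ge_or_less:
  fixes g :: "'a \<Rightarrow> real"
  assumes "F \<noteq> bot"
    and compare: "\<And>c. eventually (\<lambda>x. c \<le> g x) F \<or> eventually (\<lambda>x. g x < c) F"
    and "eventually (\<lambda>x. b \<le> g x) F" and "eventually (\<lambda>x. g x < c) F"
  shows "\<exists>a. (g \<longlongrightarrow> a) F"
proof -
  define S where "S = {s. eventually (\<lambda>x. s \<le> g x) F}"
  have "b \<in> S"
    using assms(3) by (simp add: S_def)
  have "s \<le> c" if "s \<in> S" for s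
  proof (rule ccontr)
    assume "\<not> s \<le> c"
    from that have "eventually (\<lambda>x. s \<le> g x) F"
      by (simp add: S_def)
    with assms(4) have "eventually (\<lambda>x. False) F"
      by eventually_elim (use \<open>\<not> s \<le> c\<close> in linarith)
    with \<open>F \<noteq> bot\<close> show False
      by (simp add: eventually_False)
  qed
  then have bdd: "bdd_above S"
    by (rule bdd_aboveI)
  have "(g \<longlongrightarrow> Sup S) F"
  proof (rule order_tendstoI)
    fix y assume "y < Sup S"
    then obtain s where "s \<in> S" and "y < s"
      using less_cSup_iff[OF _ bdd] \<open>b \<in> S\<close> by blast
    then show "eventually (\<lambda>x. y < g x) F"
      unfolding S_def by (auto elim: eventually_mono)
  next
    fix y assume "Sup S < y"
    from compare[of y] show "eventually (\<lambda>x. g x < y) F"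
    proof
      assume "eventually (\<lambda>x. y \<le> g x) F"
      then have "y \<le> Sup S"
        using cSup_upper[OF _ bdd] unfolding S_def by blast
      with \<open>Sup S < y\<close> show ?thesis by simp
    qed
  qed
  then show ?thesis by blast
qed

section \<open>Growth exponents\<close>

(* The elasticity x u'(x) / u(x) is the derivative of ln |u| with respect to ln x; its limit a
   is the exponent with |u(x)| = x^(a + o(1)). *)
definition has_growth_exponent :: "(real \<Rightarrow> real) \<Rightarrow> real \<Rightarrow> bool" where
  "has_growth_exponent u a \<longleftrightarrow>
     eventually (\<lambda>x. u x \<noteq> 0) at_top \<and> ((\<lambda>x. x * deriv u x / u x) \<longlongrightarrow> a) at_top"

lemma has_growth_exponent_bigtheta:
  assumes "has_growth_exponent u a" and "a \<noteq> 0"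
  shows "(\<lambda>x. x * deriv u x) \<in> \<Theta>[at_top](u)"
  using assms unfolding has_growth_exponent_def by (blast intro: bigthetaI_tendsto)

lemma ln_abs_plus_ln_at_top_deriv:
  assumes "has_growth_exponent u a" and "a \<noteq> 0"
    and "filterlim (\<lambda>x. ln \<bar>u x\<bar> + k * ln x) at_top at_top"
  shows "filterlim (\<lambda>x. ln \<bar>deriv u x\<bar> + (k + 1) * ln x) at_top at_top"
proof -
  from has_growth_exponent_bigtheta[OF assms(1,2)] have "u \<in> O[at_top](\<lambda>x. x * deriv u x)"
    by (intro bigthetaD1) (simp add: bigtheta_sym)
  then obtain c where "c > 0" and c: "eventually (\<lambda>x. \<bar>u x\<bar> \<le> c * \<bar>x * deriv u x\<bar>) at_top"
    by (elim landau_o.bigE) simp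
  have nz: "eventually (\<lambda>x. u x \<noteq> 0) at_top"
    using assms(1) unfolding has_growth_exponent_def by blast
  have "eventually (\<lambda>x. - ln c + (ln \<bar>u x\<bar> + k * ln x) \<le> ln \<bar>deriv u x\<bar> + (k + 1) * ln x) at_top"
    using c nz eventually_gt_at_top[of 0]
  proof eventually_elim
    case (elim x)
    then have "0 < \<bar>deriv u x\<bar>"
      using \<open>c > 0\<close> by (auto simp: abs_mult)
    have "ln \<bar>u x\<bar> \<le> ln (c * \<bar>x * deriv u x\<bar>)"
      using elim by simp
    also have "\<dots> = ln c + ln x + ln \<bar>deriv u x\<bar>"
      using \<open>c > 0\<close> \<open>0 < \<bar>deriv u x\<bar>\<close> elim(3) by (simp add: abs_mult ln_mult)
    finally show ?case by (simp add: algebra_simps)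
  qed
  with filterlim_tendsto_add_at_top[OF tendsto_const assms(3)] show ?thesis
    by (rule filterlim_at_top_mono)
qed

lemma ln_abs_plus_ln_at_top_of_ln_ratio:
  fixes u :: "real \<Rightarrow> real"
  assumes "((\<lambda>x. ln \<bar>u x\<bar> / ln x) \<longlongrightarrow> c) at_top" and "c + k > 0"
  shows "filterlim (\<lambda>x. ln \<bar>u x\<bar> + k * ln x) at_top at_top"
proof -
  have "filterlim (\<lambda>x. (ln \<bar>u x\<bar> / ln x + k) * ln x) at_top at_top"
    by (rule filterlim_tendsto_pos_mult_at_top[OF tendsto_add[OF assms(1) tendsto_const] assms(2) ln_at_top])
  moreover have "eventually (\<lambda>x. (ln \<bar>u x\<bar> / ln x + k) * ln x = ln \<bar>u x\<bar> + k * ln x) at_top"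
    using eventually_gt_at_top[of 1] by eventually_elim (simp add: field_simps)
  ultimately show ?thesis
    by (simp add: filterlim_cong)
qed

lemma const_smallo_abs_powr:
  fixes u :: "real \<Rightarrow> real"
  assumes "eventually (\<lambda>x. u x \<noteq> 0) at_top"
    and "((\<lambda>x. ln \<bar>u x\<bar> / ln x) \<longlongrightarrow> e) at_top" and "e < 0" and "k > 0"
  shows "(\<lambda>_. 1) \<in> o[at_top](\<lambda>x. \<bar>u x\<bar> powr (- 1 / k))"
proof -
  define p where "p = - e / (2 * k)"
  have "p > 0"
    unfolding p_def using assms(3,4) by (intro divide_pos_pos) auto
  have "eventually (\<lambda>x. \<bar>u x\<bar> \<le> x powr (e / 2)) at_top"
    by (rule eventually_abs_le_powr_of_ln_ratio[OF assms(2)]) (use assms(3) in simp)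
  then have "eventually (\<lambda>x. x powr p \<le> \<bar>u x\<bar> powr (- 1 / k)) at_top"
    using assms(1) eventually_gt_at_top[of 0]
  proof eventually_elim
    case (elim x)
    have "x powr p = (x powr (e / 2)) powr (- 1 / k)"
      by (simp add: powr_powr p_def)
    also have "\<dots> \<le> \<bar>u x\<bar> powr (- 1 / k)"
      using elim assms(4) by (intro powr_mono2') auto
    finally show ?case .
  qed
  then have "(\<lambda>x. x powr p) \<in> O[at_top](\<lambda>x. \<bar>u x\<bar> powr (- 1 / k))"
    by (intro bigoI[of _ 1]) (auto elim!: eventually_mono)
  moreover have "(\<lambda>_. 1) \<in> o[at_top](\<lambda>x. x powr p)"
  proof (rule smalloI_tendsto)
    have "((\<lambda>x. x powr - p) \<longlongrightarrow> 0) at_top"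
      using \<open>p > 0\<close> by (intro tendsto_neg_powr filterlim_ident) simp
    then show "((\<lambda>x. 1 / x powr p) \<longlongrightarrow> 0) at_top"
      by (simp add: powr_minus divide_inverse)
  qed (use eventually_gt_at_top[of 0] in \<open>auto elim: eventually_mono\<close>)
  ultimately show ?thesis
    using landau_o.small_big_trans by blast
qed

lemma abs_powr_smallo_ident:
  fixes v :: "real \<Rightarrow> real"
  assumes "eventually (\<lambda>x. v x \<noteq> 0) at_top"
    and "filterlim (\<lambda>x. ln \<bar>v x\<bar> + m * ln x) at_top at_top" and "m > 0"
  shows "(\<lambda>x. \<bar>v x\<bar> powr (- 1 / m)) \<in> o[at_top](\<lambda>x. x)"
proof (rule landau_o.smallI)
  fix C :: real assume "C > 0"
  from assms(2) have "eventually (\<lambda>x. - m * ln C \<le> ln \<bar>v x\<bar> + m * ln x) at_top"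
    by (simp add: filterlim_at_top)
  then show "eventually (\<lambda>x. norm (\<bar>v x\<bar> powr (- 1 / m)) \<le> C * norm x) at_top"
    using assms(1) eventually_gt_at_top[of 0]
  proof eventually_elim
    case (elim x)
    from elim(1) \<open>m > 0\<close> have "(- 1 / m) * ln \<bar>v x\<bar> \<le> ln C + ln x"
      by (simp add: field_simps)
    then have "\<bar>v x\<bar> powr (- 1 / m) \<le> exp (ln C + ln x)"
      using elim(2) by (simp add: powr_def)
    also have "\<dots> = C * x"
      using \<open>C > 0\<close> elim(3) by (simp add: exp_add)
    finally show ?case
      using elim(3) by simp
  qed
qed

lemma abs_powr_smallo_abs_powr:
  fixes u v :: "real \<Rightarrow> real"
  assumes nz: "eventually (\<lambda>x. u x \<noteq> 0) at_top" "eventually (\<lambda>x. v x \<noteq> 0) at_top"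
    and "(\<lambda>x. x * v x) \<in> O[at_top](u)"
    and "filterlim (\<lambda>x. ln \<bar>u x\<bar> + k * ln x) at_top at_top" and "k > 0"
  shows "(\<lambda>x. \<bar>u x\<bar> powr (- 1 / k)) \<in> o[at_top](\<lambda>x. \<bar>v x\<bar> powr (- 1 / (k + 1)))"
proof (rule landau_o.smallI)
  fix C :: real assume "C > 0"
  from assms(3) obtain A where "A > 0" and A: "eventually (\<lambda>x. \<bar>x * v x\<bar> \<le> A * \<bar>u x\<bar>) at_top"
    by (elim landau_o.bigE) simp
  define \<alpha> where "\<alpha> = 1 / k"
  define \<beta> where "\<beta> = 1 / (k + 1)"
  have "\<alpha> > 0" "\<beta> > 0" and \<alpha>\<beta>: "\<alpha> = \<beta> + \<alpha> * \<beta>" "\<alpha> * \<beta> * k = \<beta>"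
    using \<open>k > 0\<close> by (simp_all add: \<alpha>_def \<beta>_def divide_simps)
  from assms(4) have "eventually (\<lambda>x. (\<beta> * ln A - ln C) / (\<alpha> * \<beta>) \<le> ln \<bar>u x\<bar> + k * ln x) at_top"
    by (simp add: filterlim_at_top)
  then show "eventually (\<lambda>x. norm (\<bar>u x\<bar> powr (- 1 / k))
      \<le> C * norm (\<bar>v x\<bar> powr (- 1 / (k + 1)))) at_top"
    using A nz eventually_gt_at_top[of 0]
  proof eventually_elim
    case (elim x)
    define lu lv where "lu = ln \<bar>u x\<bar>" and "lv = ln \<bar>v x\<bar>"
    have "ln (\<bar>x * v x\<bar>) \<le> ln (A * \<bar>u x\<bar>)"
      using elim \<open>A > 0\<close> by simp
    then have "ln x + lv \<le> ln A + lu"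
      using elim \<open>A > 0\<close> by (simp add: lu_def lv_def abs_mult ln_mult)
    then have "\<beta> * lv + \<beta> * ln x \<le> \<beta> * lu + \<beta> * ln A"
      using \<open>\<beta> > 0\<close> by (simp flip: distrib_left)
    moreover have "\<beta> * ln A - ln C \<le> \<alpha> * \<beta> * (lu + k * ln x)"
      using elim(1) \<open>\<alpha> > 0\<close> \<open>\<beta> > 0\<close> by (simp add: lu_def pos_divide_le_eq mult.commute)
    \<comment> \<open>With \<open>\<alpha> = \<beta> + \<alpha>\<beta>\<close> and \<open>\<alpha>\<beta>k = \<beta>\<close> the two estimates combine linearly.\<close>
    moreover have "\<alpha> * \<beta> * (lu + k * ln x) = \<alpha> * \<beta> * lu + \<beta> * ln x"
      using \<alpha>\<beta>(2) by (metis distrib_left mult.assoc)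
    moreover have "\<alpha> * lu = \<beta> * lu + \<alpha> * \<beta> * lu"
      using \<alpha>\<beta>(1) by (metis distrib_right)
    ultimately have "- \<alpha> * lu \<le> ln C + - \<beta> * lv"
      by linarith
    then have "\<bar>u x\<bar> powr (- \<alpha>) \<le> exp (ln C + - \<beta> * lv)"
      using elim(3) by (simp add: powr_def lu_def)
    also have "\<dots> = C * \<bar>v x\<bar> powr (- \<beta>)"
      using \<open>C > 0\<close> elim(4) unfolding exp_add by (simp add: powr_def lv_def)
    finally show ?case
      by (simp add: \<alpha>_def \<beta>_def)
  qed
qed

lemma inverse_root_chain_of_growth_exponent:
  fixes u :: "real \<Rightarrow> real"
  assumes "eventually (\<lambda>x. (u has_real_derivative deriv u x) (at x)) at_top"
    and "has_growth_exponent u e" and "e < 0" and "k > 0"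
    and "filterlim (\<lambda>x. ln \<bar>u x\<bar> + k * ln x) at_top at_top"
  shows "(\<lambda>_. 1) \<in> o[at_top](\<lambda>x. \<bar>u x\<bar> powr (- 1 / k))"
    and "(\<lambda>x. \<bar>u x\<bar> powr (- 1 / k)) \<in> o[at_top](\<lambda>x. \<bar>deriv u x\<bar> powr (- 1 / (k + 1)))"
    and "(\<lambda>x. \<bar>deriv u x\<bar> powr (- 1 / (k + 1))) \<in> o[at_top](\<lambda>x. x)"
proof -
  from assms(2) have nz: "eventually (\<lambda>x. u x \<noteq> 0) at_top"
    and ratio: "((\<lambda>x. x * deriv u x / u x) \<longlongrightarrow> e) at_top"
    unfolding has_growth_exponent_def by blast+
  have "eventually (\<lambda>x. x * deriv u x / u x \<noteq> 0) at_top"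
    using tendsto_imp_eventually_ne[OF ratio, of 0] \<open>e < 0\<close> by simp
  then have "eventually (\<lambda>x. deriv u x \<noteq> 0) at_top"
    by eventually_elim simp
  moreover have "(\<lambda>x. x * deriv u x) \<in> O[at_top](u)"
    using has_growth_exponent_bigtheta[OF assms(2)] \<open>e < 0\<close> by auto
  moreover have "filterlim (\<lambda>x. ln \<bar>deriv u x\<bar> + (k + 1) * ln x) at_top at_top"
    using ln_abs_plus_ln_at_top_deriv[OF assms(2) _ assms(5)] \<open>e < 0\<close> by simp
  ultimately show "(\<lambda>x. \<bar>u x\<bar> powr (- 1 / k)) \<in> o[at_top](\<lambda>x. \<bar>deriv u x\<bar> powr (- 1 / (k + 1)))"
    and "(\<lambda>x. \<bar>deriv u x\<bar> powr (- 1 / (k + 1))) \<in> o[at_top](\<lambda>x. x)"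
    using abs_powr_smallo_abs_powr[OF nz _ _ assms(5,4)] abs_powr_smallo_ident \<open>k > 0\<close> by simp_all
  show "(\<lambda>_. 1) \<in> o[at_top](\<lambda>x. \<bar>u x\<bar> powr (- 1 / k))"
    using const_smallo_abs_powr[OF nz ln_ratio_tendsto_of_elasticity_tendsto[OF assms(1) nz ratio]]
      assms(3,4) .
qed

section \<open>Growth exponents in a Hardy field\<close>

lemma germ_in_cong:
  assumes "germ_in u H" and "eventually (\<lambda>x. u x = v x) at_top"
  shows "germ_in v H"
proof -
  from assms(1) obtain h where "h \<in> H" and "eventually (\<lambda>x. h x = u x) at_top"
    unfolding germ_in_def by blast
  with assms(2) have "eventually (\<lambda>x. h x = v x) at_top"
    by (auto elim: eventually_elim2)
  with \<open>h \<in> H\<close> show ?thesis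
    unfolding germ_in_def by blast
qed

lemma germ_in_self: "h \<in> H \<Longrightarrow> germ_in h H"
  unfolding germ_in_def by (intro bexI[of _ h]) simp_all

lemma germ_in_binop:
  assumes "\<forall>h\<in>H. \<forall>g\<in>H. germ_in (\<lambda>x. F (h x) (g x)) H"
    and "germ_in u H" and "germ_in v H"
  shows "germ_in (\<lambda>x. F (u x) (v x)) H"
proof -
  from assms(2,3) obtain h g where "h \<in> H" "g \<in> H"
    and "eventually (\<lambda>x. h x = u x) at_top" "eventually (\<lambda>x. g x = v x) at_top"
    unfolding germ_in_def by blast
  from assms(1) \<open>h \<in> H\<close> \<open>g \<in> H\<close> have "germ_in (\<lambda>x. F (h x) (g x)) H" by blast
  moreover from \<open>eventually (\<lambda>x. h x = u x) at_top\<close> \<open>eventually (\<lambda>x. g x = v x) at_top\<close>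
  have "eventually (\<lambda>x. F (h x) (g x) = F (u x) (v x)) at_top"
    by eventually_elim simp
  ultimately show ?thesis by (rule germ_in_cong)
qed

lemma standing_hardy_field_hardy_field: "standing_hardy_field H \<Longrightarrow> hardy_field H"
  unfolding standing_hardy_field_def by blast

lemma germ_in_ident: "standing_hardy_field H \<Longrightarrow> germ_in (\<lambda>x. x) H"
  unfolding standing_hardy_field_def using LE_id by blast

context
  fixes H :: "(real \<Rightarrow> real) set"
  assumes H: "hardy_field H"
begin

lemma germ_in_const: "germ_in (\<lambda>_. c) H"
  using H unfolding hardy_field_def by blast

lemma germ_in_add: "germ_in u H \<Longrightarrow> germ_in v H \<Longrightarrow> germ_in (\<lambda>x. u x + v x) H"
  by (rule germ_in_binop) (use H in \<open>auto simp: hardy_field_def\<close>)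

lemma germ_in_mult: "germ_in u H \<Longrightarrow> germ_in v H \<Longrightarrow> germ_in (\<lambda>x. u x * v x) H"
  by (rule germ_in_binop) (use H in \<open>auto simp: hardy_field_def\<close>)

lemma germ_in_diff:
  assumes "germ_in u H" and "germ_in v H"
  shows "germ_in (\<lambda>x. u x - v x) H"
  using germ_in_add[OF assms(1) germ_in_mult[OF germ_in_const[of "-1"] assms(2)]] by simp

lemma germ_in_inverse:
  assumes "germ_in u H"
  shows "germ_in (\<lambda>x. inverse (u x)) H"
proof -
  from assms obtain h where h: "h \<in> H" "eventually (\<lambda>x. h x = u x) at_top"
    unfolding germ_in_def by blast
  show ?thesis
  proof (cases "eventually (\<lambda>x. h x = 0) at_top")
    case True
    with h(2) have "eventually (\<lambda>x. 0 = inverse (u x)) at_top"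
      by (auto elim: eventually_elim2)
    then show ?thesis by (rule germ_in_cong[OF germ_in_const])
  next
    case False
    with H h(1) obtain g where "g \<in> H" and "eventually (\<lambda>x. h x * g x = 1) at_top"
      unfolding hardy_field_def by blast
    with h(2) have "eventually (\<lambda>x. g x = inverse (u x)) at_top"
      by (auto elim: eventually_elim2 simp: inverse_unique mult.commute)
    with \<open>g \<in> H\<close> show ?thesis by (blast intro: germ_in_cong germ_in_self)
  qed
qed

lemma germ_in_deriv:
  assumes "germ_in u H"
  shows "germ_in (deriv u) H" and "eventually (\<lambda>x. (u has_real_derivative deriv u x) (at x)) at_top"
proof -
  from assms obtain h where "h \<in> H" and hu: "eventually (\<lambda>x. h x = u x) at_top"
    unfolding germ_in_def by blast
  with H obtain h' where "h' \<in> H" and h': "eventually (\<lambda>x. (h has_real_derivative h' x) (at x)) at_top"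
    unfolding hardy_field_def by blast
  from hu obtain N where N: "\<And>x. x \<ge> N \<Longrightarrow> h x = u x"
    unfolding eventually_at_top_linorder by blast
  have "eventually (\<lambda>x. (u has_real_derivative h' x) (at x)) at_top"
    using h' eventually_gt_at_top[of N]
  proof eventually_elim
    case (elim x)
    have "eventually (\<lambda>y. y \<in> {N<..}) (nhds x)"
      using elim(2) by (intro eventually_nhds_in_open) auto
    then have "eventually (\<lambda>y. h y = u y) (nhds x)"
      by eventually_elim (use N in auto)
    with elim(1) show ?case
      using DERIV_cong_ev[of x x h u "h' x" "h' x"] by simp
  qed
  moreover from this have "eventually (\<lambda>x. h' x = deriv u x) at_top"
    by eventually_elim (simp add: DERIV_imp_deriv)
  ultimately show "eventually (\<lambda>x. (u has_real_derivative deriv u x) (at x)) at_top"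
    and "germ_in (deriv u) H"
    using germ_in_cong[OF germ_in_self[OF \<open>h' \<in> H\<close>]] by (auto elim: eventually_elim2)
qed

lemma germ_in_higher_deriv: "germ_in u H \<Longrightarrow> germ_in ((deriv ^^ k) u) H"
  by (induction k) (simp_all add: germ_in_deriv(1))

lemma eventually_sign_trichotomy:
  assumes "germ_in u H"
  shows "eventually (\<lambda>x. u x = 0) at_top \<or> eventually (\<lambda>x. u x > 0) at_top \<or>
    eventually (\<lambda>x. u x < 0) at_top"
proof (cases "eventually (\<lambda>x. u x = 0) at_top")
  case False
  from assms obtain h where h: "h \<in> H" "eventually (\<lambda>x. h x = u x) at_top"
    unfolding germ_in_def by blast
  have "\<not> eventually (\<lambda>x. h x = 0) at_top"
  proof
    assume "eventually (\<lambda>x. h x = 0) at_top"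
    with h(2) have "eventually (\<lambda>x. u x = 0) at_top" by eventually_elim simp
    with False show False by simp
  qed
  with H h(1) obtain g where "eventually (\<lambda>x. h x * g x = 1) at_top"
    unfolding hardy_field_def by blast
  with h(2) have "eventually (\<lambda>x. u x \<noteq> 0) at_top"
    by (auto elim: eventually_elim2)
  from eventually_conj[OF this germ_in_deriv(2)[OF assms]] obtain N
    where N: "\<And>x. x \<ge> N \<Longrightarrow> u x \<noteq> 0 \<and> (u has_real_derivative deriv u x) (at x)"
    unfolding eventually_at_top_linorder by blast
  have cont: "continuous_on {N..x} u" for x
    by (intro continuous_at_imp_continuous_on ballI) (use N DERIV_isCont in auto)
  have "u x > 0" if "u N > 0" "x \<ge> N" for x
    using IVT2'[of u x 0 N, OF _ _ that(2) cont] that N by force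
  moreover have "u x < 0" if "u N < 0" "x \<ge> N" for x
    using IVT'[of u N 0 x, OF _ _ that(2) cont] that N by force
  ultimately have "(\<forall>x\<ge>N. u x > 0) \<or> (\<forall>x\<ge>N. u x < 0)"
    using N[of N] by (cases "u N > 0") auto
  then show ?thesis
    unfolding eventually_at_top_linorder by blast
qed simp

lemma eventually_ge_or_less:
  assumes "germ_in u H"
  shows "eventually (\<lambda>x. c \<le> u x) at_top \<or> eventually (\<lambda>x. u x < c) at_top"
  using eventually_sign_trichotomy[OF germ_in_diff[OF assms germ_in_const[of c]]]
  by (auto elim: eventually_mono)

lemma has_growth_exponent_ln_ratio:
  assumes "germ_in u H" and "has_growth_exponent u a"
  shows "((\<lambda>x. ln \<bar>u x\<bar> / ln x) \<longlongrightarrow> a) at_top"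
  using assms(2) ln_ratio_tendsto_of_elasticity_tendsto[OF germ_in_deriv(2)[OF assms(1)]]
  unfolding has_growth_exponent_def by blast

lemma abs_deriv_le_powr_of_growth_exponent_zero:
  assumes u: "germ_in u H" and exp: "has_growth_exponent u 0" and "\<eta> > 0"
  shows "eventually (\<lambda>x. \<bar>deriv u x\<bar> \<le> x powr (\<eta> - 1)) at_top"
proof -
  from exp have nz: "eventually (\<lambda>x. u x \<noteq> 0) at_top"
    and ratio: "((\<lambda>x. x * deriv u x / u x) \<longlongrightarrow> 0) at_top"
    unfolding has_growth_exponent_def by blast+
  have "eventually (\<lambda>x. \<bar>x * deriv u x / u x\<bar> < 1) at_top"
    using order_tendstoD(2)[OF tendsto_rabs[OF ratio]] by simp
  with eventually_abs_le_powr_of_ln_ratio[OF has_growth_exponent_ln_ratio[OF u exp] \<open>\<eta> > 0\<close>]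
    nz eventually_gt_at_top[of 0]
  show ?thesis
  proof eventually_elim
    case (elim x)
    then have "x * \<bar>deriv u x\<bar> \<le> \<bar>u x\<bar>"
      by (simp add: abs_mult abs_divide divide_less_eq)
    also have "\<dots> \<le> x * x powr (\<eta> - 1)"
      using elim by (simp add: powr_diff)
    finally show ?case
      using elim(3) by simp
  qed
qed

context
  assumes ident: "germ_in (\<lambda>x. x) H"
begin

lemma elasticity_ge_or_less:
  assumes "germ_in u H"
  shows "eventually (\<lambda>x. c \<le> x * deriv u x / u x) at_top \<or>
    eventually (\<lambda>x. x * deriv u x / u x < c) at_top"
proof -
  have "germ_in (\<lambda>x. x * deriv u x * inverse (u x)) H"
    by (intro germ_in_mult ident germ_in_deriv(1) germ_in_inverse assms)
  then show ?thesis
    using eventually_ge_or_less by (simp add: divide_inverse)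
qed

lemma has_growth_exponent_exists:
  assumes u: "germ_in u H" and nz: "eventually (\<lambda>x. u x \<noteq> 0) at_top"
    and upper: "eventually (\<lambda>x. \<bar>u x\<bar> \<le> x powr c) at_top"
    and not_lower: "\<not> eventually (\<lambda>x. \<bar>u x\<bar> \<le> x powr b) at_top"
  shows "\<exists>a. has_growth_exponent u a"
proof -
  note deriv = germ_in_deriv(2)[OF u]
  have "eventually (\<lambda>x. x * deriv u x / u x < c + 1) at_top"
  proof -
    have False if "eventually (\<lambda>x. c + 1 \<le> x * deriv u x / u x) at_top"
    proof -
      from powr_le_abs_of_elasticity_ge[OF deriv nz that, of "c + 1 / 2"]
      have "eventually (\<lambda>x. x powr (c + 1 / 2) \<le> \<bar>u x\<bar>) at_top" by simp
      with upper have "eventually (\<lambda>x. x powr (c + 1 / 2) \<le> 1 * x powr c) at_top"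
        by eventually_elim simp
      then have "c + 1 / 2 \<le> c"
        by (rule eventually_powr_le_imp_le)
      then show False by simp
    qed
    with elasticity_ge_or_less[OF u] show ?thesis by blast
  qed
  moreover have "eventually (\<lambda>x. b - 1 \<le> x * deriv u x / u x) at_top"
  proof -
    have False if "eventually (\<lambda>x. x * deriv u x / u x < b - 1) at_top"
    proof -
      from that have "eventually (\<lambda>x. x * deriv u x / u x \<le> b - 1) at_top"
        by eventually_elim simp
      from abs_le_powr_of_elasticity_le[OF deriv nz this, of b] not_lower show False
        by simp
    qed
    with elasticity_ge_or_less[OF u] show ?thesis by blast
  qed
  ultimately obtain a where "((\<lambda>x. x * deriv u x / u x) \<longlongrightarrow> a) at_top"
    using tendsto_of_bounded_ge_or_less[OF trivial_limit_at_top_linorder elasticity_ge_or_less[OF u]] by blast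
  with nz show ?thesis
    unfolding has_growth_exponent_def by blast
qed

lemma has_growth_exponent_of_ln_ratio:
  assumes u: "germ_in u H" and nz: "eventually (\<lambda>x. u x \<noteq> 0) at_top"
    and ln_ratio: "((\<lambda>x. ln \<bar>u x\<bar> / ln x) \<longlongrightarrow> c) at_top"
  shows "has_growth_exponent u c"
proof -
  have "\<not> eventually (\<lambda>x. \<bar>u x\<bar> \<le> x powr (c - 2)) at_top"
  proof
    assume "eventually (\<lambda>x. \<bar>u x\<bar> \<le> x powr (c - 2)) at_top"
    moreover have "eventually (\<lambda>x. x powr (c - 1) \<le> \<bar>u x\<bar>) at_top"
      by (rule eventually_powr_le_abs_of_ln_ratio[OF ln_ratio _ nz]) simp
    ultimately have "eventually (\<lambda>x. x powr (c - 1) \<le> 1 * x powr (c - 2)) at_top"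
      by eventually_elim simp
    then have "c - 1 \<le> c - 2"
      by (rule eventually_powr_le_imp_le)
    then show False by simp
  qed
  with has_growth_exponent_exists[OF u nz eventually_abs_le_powr_of_ln_ratio[OF ln_ratio, of "c + 1"]]
  obtain a where a: "has_growth_exponent u a"
    by auto
  have "a = c"
    using tendsto_unique[OF _ has_growth_exponent_ln_ratio[OF u a] ln_ratio] by simp
  with a show ?thesis by simp
qed

lemma has_growth_exponent_deriv:
  assumes u: "germ_in u H" and exp: "has_growth_exponent u a" and "a \<noteq> 0"
  shows "has_growth_exponent (deriv u) (a - 1)"
proof -
  from exp have nz: "eventually (\<lambda>x. u x \<noteq> 0) at_top"
    and ratio: "((\<lambda>x. x * deriv u x / u x) \<longlongrightarrow> a) at_top"
    unfolding has_growth_exponent_def by blast+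
  note ln_ratio_tendsto_of_ratio_tendsto[OF nz ratio \<open>a \<noteq> 0\<close> has_growth_exponent_ln_ratio[OF u exp]]
  then show ?thesis
    by (intro has_growth_exponent_of_ln_ratio germ_in_deriv(1) u)
qed

lemma has_growth_exponent_higher_deriv:
  assumes "germ_in u H" and "has_growth_exponent u a" and "\<And>j. j < m \<Longrightarrow> a \<noteq> real j"
  shows "has_growth_exponent ((deriv ^^ m) u) (a - real m)"
  using assms(3)
proof (induction m)
  case (Suc m)
  then have "has_growth_exponent ((deriv ^^ m) u) (a - real m)"
    by simp
  from has_growth_exponent_deriv[OF germ_in_higher_deriv[OF assms(1)] this] Suc.prems[of m]
  show ?case
    by (simp add: algebra_simps)
qed (use assms(2) in simp)

lemma has_growth_exponent_deriv_of_zero: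
  assumes u: "germ_in u H" and exp: "has_growth_exponent u 0"
    and unbounded_or_null: "(\<nexists>B. eventually (\<lambda>x. \<bar>u x\<bar> \<le> B) at_top) \<or> (u \<longlongrightarrow> 0) at_top"
  shows "has_growth_exponent (deriv u) (- 1)"
proof -
  from exp have nz: "eventually (\<lambda>x. u x \<noteq> 0) at_top"
    unfolding has_growth_exponent_def by blast
  have ln_ratio: "((\<lambda>x. ln \<bar>u x\<bar> / ln x) \<longlongrightarrow> 0) at_top"
    by (rule has_growth_exponent_ln_ratio[OF u exp])
  note not_small = not_eventually_abs_deriv_le_powr[OF germ_in_deriv(2)[OF u] nz ln_ratio unbounded_or_null]
  note small = abs_deriv_le_powr_of_growth_exponent_zero[OF u exp]
  have nz': "eventually (\<lambda>x. deriv u x \<noteq> 0) at_top"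
    using eventually_sign_trichotomy[OF germ_in_deriv(1)[OF u]]
  proof (elim disjE)
    assume "eventually (\<lambda>x. deriv u x = 0) at_top"
    then have "eventually (\<lambda>x. \<bar>deriv u x\<bar> \<le> x powr (- 1 - 1)) at_top"
      by eventually_elim simp
    with not_small[of 1] show ?thesis by simp
  qed (auto elim: eventually_mono)
  obtain a where a: "has_growth_exponent (deriv u) a"
    using has_growth_exponent_exists[OF germ_in_deriv(1)[OF u] nz' small[of "1 / 2"] not_small[of 1]]
    by auto
  note ln_ratio' = has_growth_exponent_ln_ratio[OF germ_in_deriv(1)[OF u] a]
  have "a \<le> - 1"
  proof (rule ccontr)
    assume "\<not> a \<le> - 1"
    with ln_ratio_limit_le[OF ln_ratio' nz' small[of "(a + 1) / 2"]] show False
      by simp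
  qed
  moreover have "- 1 \<le> a"
  proof (rule ccontr)
    assume "\<not> - 1 \<le> a"
    then have "eventually (\<lambda>x. \<bar>deriv u x\<bar> \<le> x powr (- 1 - (- 1 - a) / 2)) at_top"
      by (intro eventually_abs_le_powr_of_ln_ratio[OF ln_ratio']) (simp add: field_simps)
    with not_small[of "(- 1 - a) / 2"] \<open>\<not> - 1 \<le> a\<close> show False
      by simp
  qed
  ultimately show ?thesis
    using a by simp
qed

lemma bigtheta_higher_deriv:
  assumes u: "germ_in u H" and exp: "has_growth_exponent u a" and "\<And>i. i < j \<Longrightarrow> a \<noteq> real i"
  shows "u \<in> \<Theta>[at_top](\<lambda>x. x ^ j * (deriv ^^ j) u x)"
  using assms(3)
proof (induction j)
  case (Suc j)
  have "has_growth_exponent ((deriv ^^ j) u) (a - real j)"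
    using has_growth_exponent_higher_deriv[OF u exp] Suc.prems by simp
  with Suc.prems[of j] have "(\<lambda>x. x * (deriv ^^ Suc j) u x) \<in> \<Theta>[at_top]((deriv ^^ j) u)"
    using has_growth_exponent_bigtheta by simp
  then have "(\<lambda>x. x ^ j * (deriv ^^ j) u x) \<in> \<Theta>[at_top](\<lambda>x. x ^ j * (x * (deriv ^^ Suc j) u x))"
    by (intro landau_theta.mult_left) (simp add: bigtheta_sym)
  with Suc.IH Suc.prems have "u \<in> \<Theta>[at_top](\<lambda>x. x ^ j * (x * (deriv ^^ Suc j) u x))"
    using landau_theta.trans by simp
  then show ?case
    by (simp add: mult_ac)
qed simp

lemma higher_deriv_unbounded:
  assumes u: "germ_in u H" and exp: "has_growth_exponent u (real n)"
    and lower: "(\<lambda>x. x ^ n) \<in> o[at_top](u)"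
  shows "\<nexists>B. eventually (\<lambda>x. \<bar>(deriv ^^ n) u x\<bar> \<le> B) at_top"
proof
  assume "\<exists>B. eventually (\<lambda>x. \<bar>(deriv ^^ n) u x\<bar> \<le> B) at_top"
  then obtain B where B: "eventually (\<lambda>x. \<bar>(deriv ^^ n) u x\<bar> \<le> B) at_top"
    by blast
  have "u \<in> O[at_top](\<lambda>x. x ^ n * (deriv ^^ n) u x)"
    using bigtheta_higher_deriv[OF u exp, of n] by auto
  moreover have "(\<lambda>x. x ^ n * (deriv ^^ n) u x) \<in> O[at_top](\<lambda>x. x ^ n)"
    using B by (intro bigoI[of _ B])
      (auto elim!: eventually_mono simp: abs_mult mult.commute[of B] intro!: mult_left_mono)
  ultimately have "u \<in> O[at_top](\<lambda>x. x ^ n)"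
    by (rule landau_o.big_trans)
  with lower have "eventually (\<lambda>x::real. x ^ n = 0) at_top"
    by (rule landau_o.small_big_asymmetric)
  with eventually_gt_at_top[of 0] have "eventually (\<lambda>x::real. False) at_top"
    by eventually_elim simp
  then show False by simp
qed

lemma higher_deriv_tendsto_zero:
  assumes u: "germ_in u H" and exp: "has_growth_exponent u (real n)"
    and upper: "u \<in> o[at_top](\<lambda>x. x ^ n)"
  shows "((deriv ^^ n) u \<longlongrightarrow> 0) at_top"
proof -
  have "u \<in> \<Theta>[at_top](\<lambda>x. x ^ n * (deriv ^^ n) u x)"
    by (rule bigtheta_higher_deriv[OF u exp]) simp
  then have "(\<lambda>x. x ^ n * (deriv ^^ n) u x) \<in> O[at_top](u)"
    by (intro bigthetaD1) (simp add: bigtheta_sym)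
  with upper have "(\<lambda>x. x ^ n * (deriv ^^ n) u x) \<in> o[at_top](\<lambda>x. x ^ n * 1)"
    using landau_o.big_small_trans by simp
  moreover have "eventually (\<lambda>x::real. x ^ n \<noteq> 0) at_top"
    using eventually_gt_at_top[of 0] by eventually_elim simp
  ultimately have "(deriv ^^ n) u \<in> o[at_top](\<lambda>_. 1)"
    by (subst (asm) landau_o.small.mult_cancel_left[OF bigtheta_refl]) simp_all
  then show ?thesis
    using smalloD_tendsto by fastforce
qed

lemma has_growth_exponent_higher_deriv_of_nat:
  assumes u: "germ_in u H" and exp: "has_growth_exponent u (real n)"
    and unbounded_or_null: "(\<nexists>B. eventually (\<lambda>x. \<bar>(deriv ^^ n) u x\<bar> \<le> B) at_top) \<or>
      ((deriv ^^ n) u \<longlongrightarrow> 0) at_top"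
    and "n < k"
  shows "has_growth_exponent ((deriv ^^ k) u) (real n - real k)"
proof -
  have "has_growth_exponent ((deriv ^^ n) u) 0"
    using has_growth_exponent_higher_deriv[OF u exp, of n] by simp
  then have "has_growth_exponent (deriv ((deriv ^^ n) u)) (- 1)"
    by (rule has_growth_exponent_deriv_of_zero[OF germ_in_higher_deriv[OF u] _ unbounded_or_null])
  then have "has_growth_exponent ((deriv ^^ (k - Suc n)) ((deriv ^^ Suc n) u)) (- 1 - real (k - Suc n))"
    by (intro has_growth_exponent_higher_deriv germ_in_higher_deriv u) simp_all
  moreover have "(deriv ^^ (k - Suc n)) ((deriv ^^ Suc n) u) = (deriv ^^ k) u"
    using fun_cong[OF funpow_add[of "k - Suc n" "Suc n" deriv], of u] \<open>n < k\<close> by simp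
  ultimately show ?thesis
    using \<open>n < k\<close> by (simp add: of_nat_diff)
qed

lemma ln_abs_deriv_plus_ln_at_top:
  assumes u: "germ_in u H" and ln_smallo: "(\<lambda>x. ln x) \<in> o[at_top](u)"
  shows "filterlim (\<lambda>x. ln \<bar>deriv u x\<bar> + ln x) at_top at_top"
  unfolding filterlim_at_top
proof
  fix M :: real
  have "germ_in (\<lambda>x. (x * deriv u x) * (x * deriv u x)) H"
    by (intro germ_in_mult ident germ_in_deriv(1) u)
  from eventually_ge_or_less[OF this, of "exp M * exp M"]
  show "eventually (\<lambda>x. M \<le> ln \<bar>deriv u x\<bar> + ln x) at_top"
  proof
    assume "eventually (\<lambda>x. exp M * exp M \<le> (x * deriv u x) * (x * deriv u x)) at_top"
    then show ?thesis
      using eventually_gt_at_top[of 0]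
    proof eventually_elim
      case (elim x)
      then have "exp M \<le> x * \<bar>deriv u x\<bar>"
        using abs_le_square_iff[of "exp M" "x * deriv u x"] by (simp add: power2_eq_square abs_mult)
      then have M_le: "M \<le> ln (x * \<bar>deriv u x\<bar>)"
        by (metis exp_gt_zero less_le_trans ln_exp ln_le_cancel_iff)
      from \<open>exp M \<le> x * \<bar>deriv u x\<bar>\<close> have "deriv u x \<noteq> 0"
        using exp_gt_zero[of M] by auto
      with elim(2) M_le show ?case
        by (simp add: ln_mult)
    qed
  next
    assume "eventually (\<lambda>x. (x * deriv u x) * (x * deriv u x) < exp M * exp M) at_top"
    then have "eventually (\<lambda>x. \<bar>x * deriv u x\<bar> \<le> exp M) at_top"
    proof eventually_elim
      case (elim x)
      then have "\<bar>x * deriv u x\<bar> \<le> \<bar>exp M\<bar>"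
        using abs_le_square_iff[of "x * deriv u x" "exp M"] by (simp add: power2_eq_square)
      then show ?case by simp
    qed
    then have "u \<in> O[at_top](\<lambda>x. ln x)"
      by (rule bigo_ln_of_abs_x_deriv_le[OF germ_in_deriv(2)[OF u]])
    with ln_smallo have "eventually (\<lambda>x::real. ln x = 0) at_top"
      by (rule landau_o.small_big_asymmetric)
    with eventually_gt_at_top[of 1] have "eventually (\<lambda>x::real. False) at_top"
      by eventually_elim simp
    then show ?thesis by simp
  qed
qed

lemma ln_abs_plus_ln_at_top_of_exponent_minus_one:
  assumes u: "germ_in u H" and exp: "has_growth_exponent ((deriv ^^ Suc n) u) (- 1)"
    and "n = 0 \<Longrightarrow> (\<lambda>x. ln x) \<in> o[at_top](u)"
  shows "filterlim (\<lambda>x. ln \<bar>(deriv ^^ Suc n) u x\<bar> + real (Suc n) * ln x) at_top at_top"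
proof (cases "n = 0")
  case True
  with ln_abs_deriv_plus_ln_at_top[OF u] assms(3) show ?thesis
    by simp
next
  case False
  show ?thesis
    by (rule ln_abs_plus_ln_at_top_of_ln_ratio[OF has_growth_exponent_ln_ratio[OF germ_in_higher_deriv[OF u] exp]])
      (use False in simp)
qed

lemma strongly_nonpolynomial_growth_exponent:
  assumes u: "germ_in u H"
    and lower: "(\<lambda>t. t ^ d) \<in> o[at_top](u)" and upper: "u \<in> o[at_top](\<lambda>t. t ^ (d + 1))"
  obtains a where "has_growth_exponent u a" and "real d \<le> a" and "a \<le> real d + 1"
proof -
  note lower' = powr_le_abs_of_power_smallo[OF lower]
  note upper' = abs_le_powr_of_smallo_power[OF upper]
  have nz: "eventually (\<lambda>x. u x \<noteq> 0) at_top"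
    using lower' eventually_gt_at_top[of 0] by eventually_elim auto
  have "\<not> eventually (\<lambda>x. \<bar>u x\<bar> \<le> x powr (real d - 1)) at_top"
  proof
    assume "eventually (\<lambda>x. \<bar>u x\<bar> \<le> x powr (real d - 1)) at_top"
    with lower' have "eventually (\<lambda>x. x powr real d \<le> 1 * x powr (real d - 1)) at_top"
      by eventually_elim simp
    then show False
      using eventually_powr_le_imp_le by fastforce
  qed
  with has_growth_exponent_exists[OF u nz upper'] obtain a where a: "has_growth_exponent u a"
    by blast
  note ln_ratio = has_growth_exponent_ln_ratio[OF u a]
  show thesis
    by (rule that[OF a ln_ratio_limit_ge[OF ln_ratio lower']])
      (use ln_ratio_limit_le[OF ln_ratio nz upper'] in simp)
qed

lemma eventually_negative_growth_exponents:
  assumes u: "germ_in u H" and "strongly_nonpolynomial u"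
    and ln_smallo: "(\<lambda>x. ln x) \<in> o[at_top](u)"
  obtains a K where "1 \<le> K"
    and "\<And>k. K \<le> k \<Longrightarrow> has_growth_exponent ((deriv ^^ k) u) (a - real k) \<and> a - real k < 0"
    and "filterlim (\<lambda>x. ln \<bar>(deriv ^^ K) u x\<bar> + real K * ln x) at_top at_top"
proof -
  from assms(2) obtain d where lower: "(\<lambda>t. t ^ d) \<in> o[at_top](u)"
    and upper: "u \<in> o[at_top](\<lambda>t. t ^ (d + 1))"
    unfolding strongly_nonpolynomial_def by blast
  obtain a where a: "has_growth_exponent u a" and bounds: "real d \<le> a" "a \<le> real d + 1"
    by (rule strongly_nonpolynomial_growth_exponent[OF u lower upper])
  show thesis
  proof (cases "\<exists>n::nat. a = real n")
    case False
    then have "a \<noteq> real (d + 1)" and "a \<noteq> real 0"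
      by blast+
    with bounds have "a < real d + 1" and "0 < a"
      by auto
    from False have exps: "has_growth_exponent ((deriv ^^ k) u) (a - real k)" for k
      using has_growth_exponent_higher_deriv[OF u a] by blast
    show thesis
    proof (rule that[of "d + 1"])
      show "filterlim (\<lambda>x. ln \<bar>(deriv ^^ (d + 1)) u x\<bar> + real (d + 1) * ln x) at_top at_top"
        by (rule ln_abs_plus_ln_at_top_of_ln_ratio[OF
            has_growth_exponent_ln_ratio[OF germ_in_higher_deriv[OF u] exps]])
          (use \<open>0 < a\<close> in simp)
    qed (use exps \<open>a < real d + 1\<close> in auto)
  next
    case True
    then obtain n where n: "a = real n"
      by blast
    with bounds have "n = d \<or> n = d + 1"
      by linarith
    from a n have exp_n: "has_growth_exponent u (real n)"
      by simp
    \<comment> \<open>The polynomial bounds keep the \<open>n\<close>-th derivative (of exponent \<open>0\<close>) from tending to a nonzero constant.\<close>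
    have "(\<nexists>B. eventually (\<lambda>x. \<bar>(deriv ^^ n) u x\<bar> \<le> B) at_top) \<or> ((deriv ^^ n) u \<longlongrightarrow> 0) at_top"
      using \<open>n = d \<or> n = d + 1\<close> higher_deriv_unbounded[OF u exp_n] higher_deriv_tendsto_zero[OF u exp_n]
        lower upper by auto
    then have exps: "has_growth_exponent ((deriv ^^ k) u) (real n - real k)" if "Suc n \<le> k" for k
      using has_growth_exponent_higher_deriv_of_nat[OF u exp_n] that by simp
    moreover have "filterlim (\<lambda>x. ln \<bar>(deriv ^^ Suc n) u x\<bar> + real (Suc n) * ln x) at_top at_top"
      using exps[OF order_refl] ln_smallo by (intro ln_abs_plus_ln_at_top_of_exponent_minus_one u) simp_all
    ultimately show thesis
      using n by (intro that[of "Suc n"]) auto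
  qed
qed

end

end

theorem propositionA2:
  fixes H :: "(real \<Rightarrow> real) set" and f :: "real \<Rightarrow> real"
  assumes "standing_hardy_field H"
    and "f \<in> H"
    and "strongly_nonpolynomial f"
    and "(\<lambda>t. ln t) \<in> o[at_top](f)"
  shows "\<forall>\<^sub>F k in sequentially.
           (\<lambda>_. 1) \<in> o[at_top](\<lambda>t. \<bar>(deriv ^^ k) f t\<bar> powr (- 1 / real k)) \<and>
           (\<lambda>t. \<bar>(deriv ^^ k) f t\<bar> powr (- 1 / real k))
              \<in> o[at_top](\<lambda>t. \<bar>(deriv ^^ (k + 1)) f t\<bar> powr (- 1 / real (k + 1))) \<and>
           (\<lambda>t. \<bar>(deriv ^^ (k + 1)) f t\<bar> powr (- 1 / real (k + 1))) \<in> o[at_top](\<lambda>t. t)"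
proof -
  have hardy: "hardy_field H" and ident: "germ_in (\<lambda>x. x) H" and f: "germ_in f H"
    using assms(1,2) by (simp_all add: standing_hardy_field_hardy_field germ_in_ident germ_in_self)
  obtain a K where "1 \<le> K"
    and exps: "\<And>k. K \<le> k \<Longrightarrow> has_growth_exponent ((deriv ^^ k) f) (a - real k) \<and> a - real k < 0"
    and "filterlim (\<lambda>x. ln \<bar>(deriv ^^ K) f x\<bar> + real K * ln x) at_top at_top"
    using eventually_negative_growth_exponents[OF hardy ident f assms(3,4)] by blast
  have B: "filterlim (\<lambda>x. ln \<bar>(deriv ^^ k) f x\<bar> + real k * ln x) at_top at_top" if "K \<le> k" for k
    using that
  proof (induction k rule: dec_induct)
    case (step k)
    with exps[of k] show ?case
      using ln_abs_plus_ln_at_top_deriv[of "(deriv ^^ k) f" "a - real k" "real k"] by (simp add: add.commute)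
  qed fact
  show ?thesis
    using eventually_ge_at_top[of K]
  proof eventually_elim
    case (elim k)
    with \<open>1 \<le> K\<close> exps[OF elim] B[OF elim]
    show ?case
      using inverse_root_chain_of_growth_exponent[OF germ_in_deriv(2)[OF hardy germ_in_higher_deriv[OF hardy f]],
          of k "a - real k" "real k"]
      by (simp add: add.commute)
  qed
qed

end
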